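(* Let $\mathbb{T}$ be a finite set of $\delta$-tubes in $B_1\subset\mathbb{R}^n$ and let $\delta=\rho_M\le\rho_{M-1}\le\dots\le\rho_1\le\rho_0=1$. Suppose that for each $k$ there is a set $\mathbb{T}_{\rho_k}$ of $\rho_k$-tubes such that (i) $\mathbb{T}=\bigcup_{T_{\rho_k}\in\mathbb{T}_{\rho_k}}\mathbb{T}[T_{\rho_k}]$; (ii) the tubes of $\mathbb{T}_{\rho_k}$ are essentially distinct, so each $T\in\mathbb{T}$ lies in $\sim1$ tubes of $\mathbb{T}_{\rho_k}$; (iii) $|\mathbb{T}[T_{\rho_k}]|$ is constant up to a factor $\sim1$ as $T_{\rho_k}$ ranges over $\mathbb{T}_{\rho_k}$. Then \[\Delta_{max}(\mathbb{T})\le C(n)^M\prod_{m=1}^M\max_{T_{\rho_{m-1}}\in\mathbb{T}_{\rho_{m-1}}}\Delta_{max}\big(\mathbb{T}_{\rho_m}[T_{\rho_{m-1}}]\big),\] where $C(n)$ depends only on $n$.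
   Context: A $\rho$-tube is the $\rho$-neighbourhood of a unit segment; $B_1$ the unit ball. For a finite family $\mathbb{W}$ of convex sets and convex $K$: $\mathbb{W}[K]=\{W\in\mathbb{W}:W\subset K\}$, $\Delta(\mathbb{W},K)=\sum_{W\in\mathbb{W}[K]}|W|/|K|$, $\Delta_{max}(\mathbb{W})=\max_{K\text{ convex}}\Delta(\mathbb{W},K)$. Tubes are essentially distinct if no two are comparable.
   Formalization: Every tube of $\mathbb{T}_{\rho_k}$, for k from 1 to M, lies inside some tube of $\mathbb{T}_{\rho_{k-1}}$, and two $\rho$-tubes are comparable when each lies in the closed $\rho$-neighbourhood of the other. Apart from conventions, each condition added here is assumed in the paper as well or is needed for the statement above to hold. *)

theory Defs
  imports "HOL-Analysis.Analysis"
begin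

definition tube :: "real \<Rightarrow> 'a::euclidean_space set \<Rightarrow> bool" where
  "tube r T \<longleftrightarrow> (\<exists>a b. dist a b = 1 \<and> T = {x. infdist x (closed_segment a b) \<le> r})"

definition subfam :: "'a set set \<Rightarrow> 'a set \<Rightarrow> 'a set set" where
  "subfam W K = {V \<in> W. V \<subseteq> K}"

definition Delta :: "'a::euclidean_space set set \<Rightarrow> 'a set \<Rightarrow> real" where
  "Delta W K = (\<Sum>V\<in>subfam W K. measure lebesgue V) / measure lebesgue K"

definition Delta_max :: "'a::euclidean_space set set \<Rightarrow> real" where
  "Delta_max W = (SUP K\<in>{K. convex K}. Delta W K)"

definition comparable :: "real \<Rightarrow> 'a::euclidean_space set \<Rightarrow> 'a set \<Rightarrow> bool" where
  "comparable r T1 T2 \<longleftrightarrow>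
     T1 \<subseteq> {x. infdist x T2 \<le> r} \<and> T2 \<subseteq> {x. infdist x T1 \<le> r}"

definition ess_distinct :: "real \<Rightarrow> 'a::euclidean_space set set \<Rightarrow> bool" where
  "ess_distinct r W \<longleftrightarrow> (\<forall>T1\<in>W. \<forall>T2\<in>W. T1 \<noteq> T2 \<longrightarrow> \<not> comparable r T1 T2)"

end

theory Submission
  imports Defs
begin

text \<open>Two-scale inequality: let every member of W lie in some \<rho>-tube of Tr and contain a unit
  segment. For convex K, a tube S containing a member of W inside K lies in the thickening
  K' = K + cball 0 (4 \<rho>), and a Rogers--Shephard type inequality gives
  |K \<inter> S| |K'| \<le> 16^n |K| |S|. Bounding the mass of W inside K \<inter> S by
  \<Delta>max(W[S]) |K \<inter> S| and summing over the tubes S inside K' yields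
  \<Delta>max(W) \<le> 16^n \<Delta>max(Tr) max_S \<Delta>max(W[S]).

  Iterating from the finest scale, where the \<delta>-tubes of TT are themselves tubes of Tr M
  (a \<delta>-tube inside another one equals it), down to scale 1 gives the product. At scale 1 the
  tubes are essentially distinct and all meet the unit ball, so there are at most C(n) of them
  and \<Delta>max(Tr 0) \<le> C(n).\<close>

section \<open>Tubes as Minkowski sums\<close>

lemma compact_set_plus:
  fixes A B :: "'a::real_normed_vector set"
  assumes "compact A" "compact B"
  shows "compact (A + B)"
proof -
  have "A + B = {x + y |x y. x \<in> A \<and> y \<in> B}"
    by (auto simp: set_plus_def)
  then show ?thesis
    using compact_sums[OF assms] by simp
qed

lemma cball_plus_cball_subset:
  "cball 0 r + cball 0 s \<subseteq> cball (0::'a::real_normed_vector) (r + s)"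
  by (auto elim!: set_plus_elim intro!: norm_triangle_le add_mono)

lemma mem_plus_cball_iff: "x \<in> A + cball 0 r \<longleftrightarrow> (\<exists>y\<in>A. dist x y \<le> r)"
  for x :: "'a::real_normed_vector"
proof
  assume "x \<in> A + cball 0 r"
  then obtain y z where "y \<in> A" "norm z \<le> r" "x = y + z"
    by (auto elim!: set_plus_elim)
  then show "\<exists>y\<in>A. dist x y \<le> r"
    by (intro bexI[of _ y]) (simp_all add: dist_norm)
next
  assume "\<exists>y\<in>A. dist x y \<le> r"
  then obtain y where "y \<in> A" "dist x y \<le> r" by blast
  then show "x \<in> A + cball 0 r"
    using set_plus_intro[of y A "x - y" "cball 0 r"] by (simp add: dist_norm norm_minus_commute)
qed

lemma infdist_le_eq_plus_cball:
  fixes A :: "'a::{heine_borel,real_normed_vector} set"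
  assumes "closed A" "A \<noteq> {}"
  shows "{x. infdist x A \<le> r} = A + cball 0 r"
  unfolding set_eq_iff mem_plus_cball_iff mem_Collect_eq
proof (intro allI iffI)
  fix x assume "infdist x A \<le> r"
  moreover obtain y where "y \<in> A" "infdist x A = dist x y"
    using infdist_attains_inf[OF assms] by blast
  ultimately show "\<exists>y\<in>A. dist x y \<le> r" by auto
qed (auto intro: infdist_le2)

lemma tube_iff:
  "tube r T \<longleftrightarrow> (\<exists>a b. dist a b = 1 \<and> T = closed_segment a b + cball 0 r)"
  unfolding tube_def by (simp add: infdist_le_eq_plus_cball)

lemma tube_compact: "tube r T \<Longrightarrow> compact T"
  by (auto simp: tube_iff intro: compact_set_plus)

lemma tube_convex: "tube r T \<Longrightarrow> convex T"
  by (auto simp: tube_iff intro: convex_set_plus)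

lemma tube_lmeasurable: "tube r T \<Longrightarrow> T \<in> lmeasurable"
  by (simp add: lmeasurable_compact tube_compact)

lemma tube_contains_unit_segment:
  assumes "tube r T" "0 \<le> r"
  obtains a b where "dist a b = 1" "closed_segment a b \<subseteq> T"
proof -
  obtain a b where "dist a b = 1" "T = closed_segment a b + cball 0 r"
    using assms(1) by (auto simp: tube_iff)
  with set_zero_plus2[of "cball 0 r" "closed_segment a b"] assms(2) show thesis
    by (simp add: that add.commute)
qed

lemma tube_nonempty:
  assumes "tube r T" "0 \<le> r"
  shows "T \<noteq> {}"
proof -
  obtain a b where "closed_segment a b \<subseteq> T"
    using tube_contains_unit_segment[OF assms] .
  then show ?thesis using ends_in_segment(1)[of a b] by blast
qed

lemma tube_contains_cball:
  assumes "tube r T"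
  obtains a where "cball a r \<subseteq> T"
proof -
  obtain a b where "T = closed_segment a b + cball 0 r"
    using assms by (auto simp: tube_iff)
  then have "cball a r \<subseteq> T"
    by (auto simp: mem_plus_cball_iff dist_commute intro!: bexI[of _ a])
  then show thesis by (rule that)
qed

lemma unit_tube_not_subset_ball:
  assumes "tube 1 T"
  shows "\<not> T \<subseteq> ball 0 1"
proof
  assume "T \<subseteq> ball 0 1"
  moreover obtain a where "cball a 1 \<subseteq> T"
    using assms by (rule tube_contains_cball)
  ultimately have "cball a 1 \<subseteq> ball 0 1" by (rule order_trans[rotated])
  then show False by (simp add: cball_subset_ball_iff)
qed

section \<open>A Rogers--Shephard type inequality\<close>

lemma emeasure_lborel_compact:
  fixes S :: "'a::euclidean_space set"
  assumes "compact S"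
  shows "emeasure lborel S = ennreal (measure lebesgue S)"
  using assms emeasure_compact_finite[OF assms]
  by (simp add: borel_compact emeasure_eq_ennreal_measure)

lemma nn_integral_emeasure_Int_translates:
  fixes K Q :: "'a::euclidean_space set"
  assumes "compact K" "compact Q"
  shows "(\<integral>\<^sup>+x. emeasure lborel (K \<inter> (+) x ` Q) \<partial>lborel) = emeasure lborel K * emeasure lborel Q"
proof -
  let ?E = "snd -` K \<inter> (\<lambda>p :: 'a \<times> 'a. snd p - fst p) -` Q"
  have "closed ?E"
    using assms by (intro closed_Int continuous_closed_vimage compact_imp_closed continuous_intros)
  then have E: "?E \<in> sets (lborel \<Otimes>\<^sub>M lborel)"
    unfolding lborel_prod by (simp add: borel_closed)
  have fubini: "pair_sigma_finite lborel (lborel :: 'a measure)"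
    by (simp add: pair_sigma_finite_def lborel.sigma_finite_measure_axioms)
  have x_slice: "K \<inter> (+) x ` Q = Pair x -` ?E" for x
    by (auto simp: image_iff) (metis add.commute diff_add_cancel)
  have y_slice: "(\<lambda>x. (x, y)) -` ?E = (if y \<in> K then (\<lambda>q. (-1) *\<^sub>R q + y) ` Q else {})" for y
    by (auto simp: image_iff) (metis add.commute diff_add_cancel minus_diff_eq uminus_add_conv_diff)
  have reflect: "emeasure lborel ((\<lambda>q. (-1) *\<^sub>R q + y) ` Q) = emeasure lborel Q" for y
  proof -
    have "compact ((\<lambda>q. (-1) *\<^sub>R q + y) ` Q)"
      by (intro compact_continuous_image assms continuous_intros)
    then show ?thesis
      using emeasure_lebesgue_affine[of "-1" y Q] assms(2) by (simp add: borel_compact)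
  qed
  have "(\<integral>\<^sup>+x. emeasure lborel (K \<inter> (+) x ` Q) \<partial>lborel) = emeasure (lborel \<Otimes>\<^sub>M lborel) ?E"
    using lborel.emeasure_pair_measure_alt[OF E] by (simp add: x_slice)
  also have "\<dots> = (\<integral>\<^sup>+y. emeasure lborel ((\<lambda>x. (x, y)) -` ?E) \<partial>lborel)"
    using pair_sigma_finite.emeasure_pair_measure_alt2[OF fubini E] .
  also have "\<dots> = (\<integral>\<^sup>+y. emeasure lborel Q * indicator K y \<partial>lborel)"
    using reflect by (intro nn_integral_cong) (simp del: vimage_Int add: y_slice split: split_indicator)
  also have "\<dots> = emeasure lborel Q * emeasure lborel K"
    using assms(1) by (simp add: borel_compact nn_integral_cmult_indicator)
  finally show ?thesis by (simp add: mult.commute)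
qed

lemma halfway_Int_translate_subset:
  fixes K Q :: "'a::real_vector set"
  assumes "convex K" "convex Q" "k \<in> K" "q \<in> Q"
  shows "(\<lambda>y. (1/2) *\<^sub>R y + (1/2) *\<^sub>R k) ` (K \<inter> (+) x ` Q)
           \<subseteq> K \<inter> (+) ((1/2) *\<^sub>R (k - q) + (1/2) *\<^sub>R x) ` Q"
proof
  fix z assume "z \<in> (\<lambda>y. (1/2) *\<^sub>R y + (1/2) *\<^sub>R k) ` (K \<inter> (+) x ` Q)"
  then obtain y where y: "y \<in> K" "y - x \<in> Q" "z = (1/2) *\<^sub>R y + (1/2) *\<^sub>R k"
    by (auto simp: image_iff)
  have "z \<in> K"
    using assms(1,3) y by (simp add: convex_def)
  moreover have "(1/2) *\<^sub>R (y - x) + (1/2) *\<^sub>R q \<in> Q"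
    using assms(2,4) y by (simp add: convex_def)
  moreover have "z = ((1/2) *\<^sub>R (k - q) + (1/2) *\<^sub>R x) + ((1/2) *\<^sub>R (y - x) + (1/2) *\<^sub>R q)"
    using y by (simp add: algebra_simps)
  ultimately show "z \<in> K \<inter> (+) ((1/2) *\<^sub>R (k - q) + (1/2) *\<^sub>R x) ` Q"
    by auto
qed

text \<open>For y in the half-size copy (K - Q)/2 + x/2, the set K \<inter> (y + Q) contains a copy of
  K \<inter> (x + Q) scaled by 1/2; integrating over y and using the previous identity gives the bound.\<close>
lemma measure_differences_mult_Int_translate_le:
  fixes K Q :: "'a::euclidean_space set"
  assumes K: "compact K" "convex K" and Q: "compact Q" "convex Q"
  shows "measure lebesgue {k - q | k q. k \<in> K \<and> q \<in> Q} * measure lebesgue (K \<inter> (+) x ` Q)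
     \<le> 4 ^ DIM('a) * measure lebesgue K * measure lebesgue Q"
proof -
  define D where "D = {k - q | k q. k \<in> K \<and> q \<in> Q}"
  define H where "H = (\<lambda>y. (1/2::real) *\<^sub>R y + (1/2::real) *\<^sub>R x) ` D"
  define m where "m = (1/2::real) ^ DIM('a) * measure lebesgue (K \<inter> (+) x ` Q)"
  have compact_Int: "compact (K \<inter> (+) y ` Q)" for y
    by (intro compact_Int_closed K(1) compact_imp_closed compact_continuous_image Q(1) continuous_intros)
  have "compact D" unfolding D_def using compact_differences[OF K(1) Q(1)] by simp
  then have "compact H" unfolding H_def by (intro compact_continuous_image continuous_intros)
  have m_le: "m \<le> measure lebesgue (K \<inter> (+) y ` Q)" if "y \<in> H" for y
  proof -
    obtain k q where kq: "k \<in> K" "q \<in> Q" "y = (1/2) *\<^sub>R (k - q) + (1/2) *\<^sub>R x"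
      using \<open>y \<in> H\<close> unfolding H_def D_def by auto
    have "m = measure lebesgue ((\<lambda>y. (1/2) *\<^sub>R y + (1/2) *\<^sub>R k) ` (K \<inter> (+) x ` Q))"
      using measure_lebesgue_affine[of "1/2" "(1/2) *\<^sub>R k" "K \<inter> (+) x ` Q"] by (simp add: m_def)
    also have "\<dots> \<le> measure lebesgue (K \<inter> (+) y ` Q)"
    proof (rule measure_mono_fmeasurable)
      show "(\<lambda>y. (1/2) *\<^sub>R y + (1/2) *\<^sub>R k) ` (K \<inter> (+) x ` Q) \<in> sets lebesgue"
        by (intro fmeasurableD lmeasurable_compact compact_continuous_image compact_Int continuous_intros)
    qed (use halfway_Int_translate_subset[OF K(2) Q(2) kq(1,2), of x] compact_Int[of y] in
        \<open>auto simp: kq(3) lmeasurable_compact\<close>)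
    finally show ?thesis .
  qed
  have "ennreal (m * measure lebesgue H) = (\<integral>\<^sup>+y. ennreal m * indicator H y \<partial>lborel)"
    using \<open>compact H\<close> by (simp add: nn_integral_cmult_indicator borel_compact
        emeasure_lborel_compact ennreal_mult' m_def)
  also have "\<dots> \<le> (\<integral>\<^sup>+y. emeasure lborel (K \<inter> (+) y ` Q) \<partial>lborel)"
    using m_le by (intro nn_integral_mono) (auto split: split_indicator simp: emeasure_lborel_compact compact_Int)
  also have "\<dots> = ennreal (measure lebesgue K * measure lebesgue Q)"
    using K Q by (simp add: nn_integral_emeasure_Int_translates emeasure_lborel_compact ennreal_mult')
  finally have "m * measure lebesgue H \<le> measure lebesgue K * measure lebesgue Q"
    by (subst (asm) ennreal_le_iff) auto
  moreover have "measure lebesgue H = (1/2) ^ DIM('a) * measure lebesgue D"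
    unfolding H_def using measure_lebesgue_affine[of "1/2" "(1/2::real) *\<^sub>R x" D] by simp
  ultimately show ?thesis
    by (simp add: m_def D_def field_simps power_mult_distrib[symmetric])
qed

text \<open>With Q = 4 (S - c) one has S \<subseteq> c + Q by convexity and K + cball 0 (4 r) \<subseteq> K - Q
  because cball c r \<subseteq> S.\<close>
lemma measure_Int_mult_plus_cball_le:
  fixes K S :: "'a::euclidean_space set"
  assumes K: "compact K" "convex K" and S: "compact S" "convex S"
    and "0 \<le> r" "cball c r \<subseteq> S"
  shows "measure lebesgue (K \<inter> S) * measure lebesgue (K + cball 0 (4 * r))
           \<le> 16 ^ DIM('a) * measure lebesgue K * measure lebesgue S"
proof -
  define Q where "Q = (\<lambda>x. 4 *\<^sub>R x + (- 4 *\<^sub>R c)) ` S"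
  have "compact Q" unfolding Q_def by (intro compact_continuous_image S(1) continuous_intros)
  have "convex Q"
    unfolding Q_def using convex_affinity[OF S(2), of "- 4 *\<^sub>R c" 4] by (simp add: add.commute)
  have mQ: "measure lebesgue Q = 4 ^ DIM('a) * measure lebesgue S"
    unfolding Q_def using measure_lebesgue_affine[of 4 "- 4 *\<^sub>R c" S] by simp
  have "c \<in> S" using assms(5,6) by auto
  have S_sub: "S \<subseteq> (+) c ` Q"
  proof
    fix x assume "x \<in> S"
    then have "(3/4) *\<^sub>R c + (1/4) *\<^sub>R x \<in> S"
      using S(2) \<open>c \<in> S\<close> unfolding convex_def by auto
    moreover have "x = c + (4 *\<^sub>R ((3/4) *\<^sub>R c + (1/4) *\<^sub>R x) + (- 4 *\<^sub>R c))"
      using scaleR_left_distrib[of 1 3 c] by (simp add: algebra_simps)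
    ultimately show "x \<in> (+) c ` Q" unfolding Q_def by blast
  qed
  define D where "D = {k - q | k q. k \<in> K \<and> q \<in> Q}"
  have K'_sub: "K + cball 0 (4 * r) \<subseteq> D"
  proof
    fix x assume "x \<in> K + cball 0 (4 * r)"
    then obtain k z where kz: "k \<in> K" "norm z \<le> 4 * r" "x = k + z"
      by (auto elim!: set_plus_elim)
    have "c - (1/4) *\<^sub>R z \<in> S"
      using kz(2) assms(6) by (auto simp: dist_norm)
    then have "4 *\<^sub>R (c - (1/4) *\<^sub>R z) + (- 4 *\<^sub>R c) \<in> Q" unfolding Q_def by blast
    moreover have "x = k - (4 *\<^sub>R (c - (1/4) *\<^sub>R z) + (- 4 *\<^sub>R c))"
      using kz(3) by (simp add: algebra_simps)
    ultimately show "x \<in> D" unfolding D_def using kz(1) by blast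
  qed
  have "compact D" unfolding D_def using compact_differences[OF K(1) \<open>compact Q\<close>] by simp
  have compact_Int: "compact (K \<inter> (+) c ` Q)"
    by (intro compact_Int_closed K(1) compact_imp_closed compact_continuous_image \<open>compact Q\<close> continuous_intros)
  have "measure lebesgue (K \<inter> S) * measure lebesgue (K + cball 0 (4 * r))
          \<le> measure lebesgue (K \<inter> (+) c ` Q) * measure lebesgue D"
  proof (intro mult_mono measure_mono_fmeasurable)
    show "K + cball 0 (4 * r) \<in> sets lebesgue"
      by (intro fmeasurableD lmeasurable_compact compact_set_plus K(1) compact_cball)
  qed (use S_sub K'_sub compact_Int \<open>compact D\<close> K(1) S(1) in \<open>auto simp: lmeasurable_compact fmeasurableD\<close>)
  also have "\<dots> \<le> 4 ^ DIM('a) * measure lebesgue K * measure lebesgue Q"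
    using measure_differences_mult_Int_translate_le[OF K \<open>compact Q\<close> \<open>convex Q\<close>, of c]
    unfolding D_def by (simp add: mult.commute)
  also have "\<dots> = 16 ^ DIM('a) * measure lebesgue K * measure lebesgue S"
    unfolding mQ by (simp add: power_mult_distrib[symmetric])
  finally show ?thesis .
qed

section \<open>Unit segments close to each other\<close>

lemma closed_segment_param:
  "y \<in> closed_segment c d \<longleftrightarrow> (\<exists>s. 0 \<le> s \<and> s \<le> 1 \<and> y = c + s *\<^sub>R (d - c))"
  unfolding closed_segment_def by (auto simp: algebra_simps)

lemma dist_along_unit_vector:
  assumes "norm v = 1"
  shows "dist (c + s *\<^sub>R v) (c + t *\<^sub>R v) = \<bar>s - t\<bar>"
proof -
  have "c + s *\<^sub>R v - (c + t *\<^sub>R v) = (s - t) *\<^sub>R v" by (simp add: algebra_simps)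
  then show ?thesis using assms by (simp add: dist_norm)
qed

lemma closed_segment_subset_near_ends:
  fixes c d c' d' :: "'a::real_normed_vector"
  assumes "dist c c' \<le> e" "dist d d' \<le> e"
  shows "closed_segment c d \<subseteq> closed_segment c' d' + cball 0 e"
proof
  fix y assume "y \<in> closed_segment c d"
  then obtain u where u: "0 \<le> u" "u \<le> 1" "y = (1 - u) *\<^sub>R c + u *\<^sub>R d"
    unfolding closed_segment_def by blast
  have "dist y ((1 - u) *\<^sub>R c' + u *\<^sub>R d') = norm ((1 - u) *\<^sub>R (c - c') + u *\<^sub>R (d - d'))"
    unfolding u(3) dist_norm by (simp add: algebra_simps)
  also have "\<dots> \<le> (1 - u) * norm (c - c') + u * norm (d - d')"
    using norm_triangle_ineq[of "(1 - u) *\<^sub>R (c - c')" "u *\<^sub>R (d - d')"] u by simp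
  also have "\<dots> \<le> (1 - u) * e + u * e"
    using assms u by (intro add_mono mult_left_mono) (auto simp: dist_norm)
  also have "\<dots> = e" by (simp add: algebra_simps)
  finally have "dist y ((1 - u) *\<^sub>R c' + u *\<^sub>R d') \<le> e" .
  moreover have "(1 - u) *\<^sub>R c' + u *\<^sub>R d' \<in> closed_segment c' d'"
    using u unfolding closed_segment_def by blast
  ultimately show "y \<in> closed_segment c' d' + cball 0 e"
    by (auto simp: mem_plus_cball_iff)
qed

text \<open>The points c + sa v and c + sb v lie near the ends of the unit segment [a, b], so
  sb - sa \<ge> 1 - 2 \<rho>: parameters between sa and sb give points near [a, b] by convexity,
  all others lie within 2 \<rho> of c + sa v or c + sb v.\<close>
lemma unit_segment_point_near_segment:
  fixes a b c v :: "'a::euclidean_space"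
  assumes ab: "dist a b = 1" and v: "norm v = 1"
    and s: "0 \<le> sa" "sa \<le> sb" "sb \<le> 1" "0 \<le> s" "s \<le> 1"
    and da: "dist a (c + sa *\<^sub>R v) \<le> \<rho>" and db: "dist b (c + sb *\<^sub>R v) \<le> \<rho>"
  shows "c + s *\<^sub>R v \<in> closed_segment a b + cball 0 (3 * \<rho>)"
proof -
  let ?p = "\<lambda>t. c + t *\<^sub>R v"
  have dp: "dist (?p x) (?p y) = \<bar>x - y\<bar>" for x y using dist_along_unit_vector[OF v] .
  have "dist a b \<le> dist a (?p sa) + dist (?p sa) (?p sb) + dist (?p sb) b"
    using dist_triangle[of a b "?p sa"] dist_triangle[of "?p sa" b "?p sb"] by linarith
  then have gap: "1 - 2 * \<rho> \<le> sb - sa"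
    using ab da db dp[of sa sb] s v by (simp add: dist_commute)
  consider "s \<le> sa" | "sb \<le> s" | "sa < s \<and> s < sb" by linarith
  then have "\<exists>y\<in>closed_segment a b. dist (?p s) y \<le> 3 * \<rho>"
  proof cases
    case 1
    have "dist (?p s) a \<le> dist (?p s) (?p sa) + dist (?p sa) a" by (rule dist_triangle)
    also have "\<dots> \<le> 3 * \<rho>" using dp[of s sa] 1 gap s da v by (simp add: dist_commute)
    finally show ?thesis by auto
  next
    case 2
    have "dist (?p s) b \<le> dist (?p s) (?p sb) + dist (?p sb) b" by (rule dist_triangle)
    also have "\<dots> \<le> 3 * \<rho>" using dp[of s sb] 2 gap s db v by (simp add: dist_commute)
    finally show ?thesis by auto
  next
    case 3
    define u where "u = (s - sa) / (sb - sa)"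
    have u: "0 \<le> u" "u \<le> 1" using 3 by (auto simp: u_def field_simps)
    have "u * (sb - sa) = s - sa" using 3 by (simp add: u_def)
    then have su: "s = (1 - u) * sa + u * sb" by (simp add: algebra_simps)
    have "?p s = (1 - u) *\<^sub>R ?p sa + u *\<^sub>R ?p sb"
      by (simp add: su algebra_simps)
    then have "?p s \<in> closed_segment (?p sa) (?p sb)"
      using u unfolding closed_segment_def by blast
    moreover have "closed_segment (?p sa) (?p sb) \<subseteq> closed_segment a b + cball 0 \<rho>"
      using da db by (intro closed_segment_subset_near_ends) (simp_all add: dist_commute)
    ultimately have "?p s \<in> closed_segment a b + cball 0 \<rho>" by blast
    then obtain y where "y \<in> closed_segment a b" "dist (?p s) y \<le> \<rho>"
      by (auto simp: mem_plus_cball_iff)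
    moreover have "0 \<le> \<rho>" using order_trans[OF zero_le_dist da] .
    ultimately show ?thesis by force
  qed
  then show ?thesis by (simp add: mem_plus_cball_iff)
qed

lemma unit_segment_subset_near_segment:
  fixes a b c d :: "'a::euclidean_space"
  assumes ab: "dist a b = 1" and cd: "dist c d = 1"
    and a: "a \<in> closed_segment c d + cball 0 \<rho>" and b: "b \<in> closed_segment c d + cball 0 \<rho>"
  shows "closed_segment c d \<subseteq> closed_segment a b + cball 0 (3 * \<rho>)"
proof
  fix p assume "p \<in> closed_segment c d"
  then obtain s where s: "0 \<le> s" "s \<le> 1" "p = c + s *\<^sub>R (d - c)"
    by (auto simp: closed_segment_param)
  have v: "norm (d - c) = 1" using cd by (simp add: dist_norm norm_minus_commute)
  obtain sa where sa: "0 \<le> sa" "sa \<le> 1" "dist a (c + sa *\<^sub>R (d - c)) \<le> \<rho>"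
    using a by (auto simp: mem_plus_cball_iff closed_segment_param)
  obtain sb where sb: "0 \<le> sb" "sb \<le> 1" "dist b (c + sb *\<^sub>R (d - c)) \<le> \<rho>"
    using b by (auto simp: mem_plus_cball_iff closed_segment_param)
  show "p \<in> closed_segment a b + cball 0 (3 * \<rho>)"
  proof (cases "sa \<le> sb")
    case True
    then show ?thesis
      using unit_segment_point_near_segment[OF ab v sa(1) True sb(2) s(1,2) sa(3) sb(3)] s(3) by simp
  next
    case False
    then show ?thesis
      using unit_segment_point_near_segment[OF _ v sb(1) _ sa(2) s(1,2) sb(3) sa(3)] ab s(3)
      by (simp add: dist_commute closed_segment_commute)
  qed
qed

lemma tube_subset_plus_cball:
  assumes S: "tube \<rho> S" and ab: "dist a b = 1" "a \<in> S" "b \<in> S"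
  shows "S \<subseteq> closed_segment a b + cball 0 (4 * \<rho>)"
proof -
  obtain c d where cd: "dist c d = 1" "S = closed_segment c d + cball 0 \<rho>"
    using S by (auto simp: tube_iff)
  have "closed_segment c d \<subseteq> closed_segment a b + cball 0 (3 * \<rho>)"
    using unit_segment_subset_near_segment[OF ab(1) cd(1)] ab(2,3) cd(2) by simp
  then have "S \<subseteq> (closed_segment a b + cball 0 (3 * \<rho>)) + cball 0 \<rho>"
    unfolding cd(2) by (rule set_plus_mono2) simp
  also have "\<dots> = closed_segment a b + (cball 0 (3 * \<rho>) + cball 0 \<rho>)"
    by (rule add.assoc)
  also have "\<dots> \<subseteq> closed_segment a b + cball 0 (4 * \<rho>)"
    using cball_plus_cball_subset[of "3 * \<rho>" \<rho>] by (intro set_plus_mono2) simp_all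
  finally show ?thesis .
qed

lemma eq_scaleR_if_inner_ge_norm:
  fixes p u :: "'a::real_inner"
  assumes "norm u = 1" "norm p \<le> e" "e \<le> inner p u"
  shows "p = e *\<^sub>R u"
proof -
  have "inner p u \<le> norm p" using norm_cauchy_schwarz[of p u] assms(1) by simp
  then have "norm p = e" "inner p u = e" using assms by linarith+
  then have "inner p p = e * e" "inner p u = e" "inner u u = 1"
    using assms(1) by (simp_all add: power2_norm_eq_inner[symmetric] power2_eq_square norm_eq_1)
  moreover have "inner (p - e *\<^sub>R u) (p - e *\<^sub>R u) = inner p p - 2 * e * inner p u + e * e * inner u u"
    by (simp add: inner_diff_left inner_diff_right algebra_simps inner_commute)
  ultimately have "inner (p - e *\<^sub>R u) (p - e *\<^sub>R u) = 0"
    by simp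
  then show ?thesis by simp
qed

lemma closed_segment_eq_if_ends_in_segment:
  fixes a b c d :: "'a::euclidean_space"
  assumes "a \<in> closed_segment c d" "b \<in> closed_segment c d" "dist a b = dist c d"
  shows "closed_segment a b = closed_segment c d"
proof (cases "c = d")
  case False
  obtain s where s: "0 \<le> s" "s \<le> 1" "a = c + s *\<^sub>R (d - c)"
    using assms(1) by (auto simp: closed_segment_param)
  obtain t where t: "0 \<le> t" "t \<le> 1" "b = c + t *\<^sub>R (d - c)"
    using assms(2) by (auto simp: closed_segment_param)
  have "a - b = (s - t) *\<^sub>R (d - c)" by (simp add: s(3) t(3) algebra_simps)
  then have "\<bar>s - t\<bar> * dist c d = dist c d"
    using assms(3) by (simp add: dist_norm norm_minus_commute)
  then have "\<bar>s - t\<bar> = 1" using False by simp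
  then have "(s = 0 \<and> t = 1) \<or> (s = 1 \<and> t = 0)" using s t by linarith
  then show ?thesis using s(3) t(3) by (auto simp: closed_segment_commute)
qed (use assms in auto)

text \<open>The points of T at distance \<delta> beyond the ends of its core segment force the core
  segment of S to have the same ends.\<close>
lemma tube_subset_tube_eq:
  fixes S T :: "'a::euclidean_space set"
  assumes T: "tube \<delta> T" and S: "tube \<delta> S" and "0 < \<delta>" and "T \<subseteq> S"
  shows "T = S"
proof -
  obtain a b where ab: "dist a b = 1" "T = closed_segment a b + cball 0 \<delta>"
    using T by (auto simp: tube_iff)
  obtain c d where cd: "dist c d = 1" "S = closed_segment c d + cball 0 \<delta>"
    using S by (auto simp: tube_iff)
  define u where "u = b - a"
  have u: "norm u = 1" "inner u u = 1"
    using ab(1) by (simp_all add: u_def dist_norm norm_minus_commute norm_eq_1[symmetric])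
  have "a - \<delta> *\<^sub>R u \<in> T"
    using ab(2) u \<open>0 < \<delta>\<close> by (auto simp: mem_plus_cball_iff dist_norm intro!: bexI[of _ a])
  moreover have "b + \<delta> *\<^sub>R u \<in> T"
    using ab(2) u \<open>0 < \<delta>\<close> by (auto simp: mem_plus_cball_iff dist_norm intro!: bexI[of _ b])
  ultimately have "a - \<delta> *\<^sub>R u \<in> S" "b + \<delta> *\<^sub>R u \<in> S" using \<open>T \<subseteq> S\<close> by auto
  then obtain y y' where y: "y \<in> closed_segment c d" "dist (a - \<delta> *\<^sub>R u) y \<le> \<delta>"
    and y': "y' \<in> closed_segment c d" "dist (b + \<delta> *\<^sub>R u) y' \<le> \<delta>"
    using cd(2) by (auto simp: mem_plus_cball_iff)
  define p q r where "p = y - (a - \<delta> *\<^sub>R u)" and "q = y' - y" and "r = (b + \<delta> *\<^sub>R u) - y'"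
  have "norm p \<le> \<delta>" "norm r \<le> \<delta>"
    using y y' by (simp_all add: p_def r_def dist_norm norm_minus_commute)
  moreover have "norm q \<le> 1"
  proof -
    obtain s t where "0 \<le> s" "s \<le> 1" "y = c + s *\<^sub>R (d - c)" "0 \<le> t" "t \<le> 1" "y' = c + t *\<^sub>R (d - c)"
      using y(1) y'(1) by (auto simp: closed_segment_param)
    moreover have "norm (d - c) = 1" using cd(1) by (simp add: dist_norm norm_minus_commute)
    ultimately show ?thesis
      using dist_along_unit_vector[of "d - c" c t s] by (simp add: q_def dist_norm)
  qed
  moreover have "inner p u + inner q u + inner r u = 1 + 2 * \<delta>"
  proof -
    have "p + q + r = u + \<delta> *\<^sub>R u + \<delta> *\<^sub>R u"
      by (simp add: p_def q_def r_def u_def algebra_simps)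
    then have "inner (p + q + r) u = 1 + 2 * \<delta>" using u(2) by (simp add: inner_add_left)
    then show ?thesis by (simp add: inner_add_left)
  qed
  moreover have "inner p u \<le> norm p" "inner q u \<le> norm q" "inner r u \<le> norm r"
    using norm_cauchy_schwarz[of _ u] u(1) by auto
  ultimately have "\<delta> \<le> inner p u" "\<delta> \<le> inner r u" by linarith+
  then have "p = \<delta> *\<^sub>R u" "r = \<delta> *\<^sub>R u"
    using eq_scaleR_if_inner_ge_norm[OF u(1)] \<open>norm p \<le> \<delta>\<close> \<open>norm r \<le> \<delta>\<close> by blast+
  then have "y = a" "y' = b" by (simp_all add: p_def r_def)
  then have "closed_segment a b = closed_segment c d"
    using closed_segment_eq_if_ends_in_segment y(1) y'(1) ab(1) cd(1) by metis
  then show ?thesis using ab(2) cd(2) by (simp only:)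
qed

lemma tube_family_subset_covering_tubes:
  fixes TT Tr :: "'a::euclidean_space set set"
  assumes "0 < \<delta>" "\<forall>T\<in>TT. tube \<delta> T" "\<forall>S\<in>Tr. tube \<delta> S" "TT = (\<Union>S\<in>Tr. subfam TT S)"
  shows "TT \<subseteq> Tr"
proof
  fix T assume "T \<in> TT"
  then obtain S where "S \<in> Tr" "T \<subseteq> S" using assms(4) by (auto simp: subfam_def)
  then have "T = S" using tube_subset_tube_eq assms(1-3) \<open>T \<in> TT\<close> by blast
  then show "T \<in> Tr" using \<open>S \<in> Tr\<close> by simp
qed

section \<open>Packing unit tubes\<close>

lemma comparable_if_near_ends:
  fixes c d c' d' :: "'a::euclidean_space"
  assumes "dist c c' \<le> r" "dist d d' \<le> r"
  shows "comparable r (closed_segment c d + cball 0 r) (closed_segment c' d' + cball 0 r)"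
proof -
  have r: "0 \<le> r" using assms(1) zero_le_dist order_trans by blast
  have thickening: "{x. infdist x (closed_segment p q + cball 0 r) \<le> r}
                      = closed_segment p q + cball 0 r + cball 0 r" for p q :: 'a
    using r set_plus_intro[of p "closed_segment p q" 0 "cball 0 r"]
    by (intro infdist_le_eq_plus_cball compact_imp_closed compact_set_plus) auto
  have near: "closed_segment p q + cball 0 r \<subseteq> closed_segment p' q' + cball 0 r + cball 0 r"
    if "dist p p' \<le> r" "dist q q' \<le> r" for p q p' q' :: 'a
    by (rule set_plus_mono2[OF closed_segment_subset_near_ends[OF that] order_refl])
  show ?thesis
    unfolding comparable_def thickening
    using near[OF assms] near[of c' c d' d] assms by (simp add: dist_commute)
qed

lemma unit_tube_meeting_ball_end_in_cball:
  fixes c d :: "'a::euclidean_space"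
  assumes "dist c d = 1" "(closed_segment c d + cball 0 1) \<inter> ball 0 1 \<noteq> {}"
  shows "c \<in> cball 0 3"
proof -
  obtain x y where "norm x < 1" "y \<in> closed_segment c d" "dist x y \<le> 1"
    using assms(2) by (auto simp: mem_plus_cball_iff)
  moreover have "dist y c \<le> 1" using dist_in_closed_segment[OF \<open>y \<in> _\<close>] assms(1) by simp
  moreover have "norm c \<le> norm x + dist x y + dist y c"
    using dist_triangle[of c 0 x] dist_triangle[of c x y] by (simp add: dist_commute)
  ultimately show ?thesis by simp
qed

text \<open>The ends of such tubes lie in cball 0 3; two tubes whose ends lie in the same cells of
  a finite 1/2-net of cball 0 3 are comparable, hence equal.\<close>
lemma card_ess_distinct_unit_tubes_bounded:
  obtains P :: nat where "\<And>Tr :: 'a::euclidean_space set set.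
    finite Tr \<Longrightarrow> \<forall>S\<in>Tr. tube 1 S \<and> S \<inter> ball 0 1 \<noteq> {} \<Longrightarrow> ess_distinct 1 Tr \<Longrightarrow> card Tr \<le> P"
proof -
  have cover: "cball (0::'a) 3 \<subseteq> (\<Union>c\<in>cball 0 3. ball c (1/2))"
    by (auto intro!: bexI)
  obtain F :: "'a set" where "F \<subseteq> cball 0 3" and F: "finite F" "cball 0 3 \<subseteq> (\<Union>f\<in>F. ball f (1/2))"
    by (rule compactE_image[OF compact_cball open_ball cover])
  have near_net: "\<forall>x\<in>cball 0 3. \<exists>f. f \<in> F \<and> dist x f < 1/2"
    using F(2) by (fastforce simp: dist_commute)
  obtain net :: "'a \<Rightarrow> 'a" where net: "\<And>x. x \<in> cball 0 3 \<Longrightarrow> net x \<in> F \<and> dist x (net x) < 1/2"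
    using bchoice[OF near_net] by blast
  show thesis
  proof (rule that)
    fix Tr :: "'a set set"
    assume "finite Tr" and Tr: "\<forall>S\<in>Tr. tube 1 S \<and> S \<inter> ball 0 1 \<noteq> {}" and "ess_distinct 1 Tr"
    have core_segment: "\<forall>S\<in>Tr. \<exists>p. dist (fst p) (snd p) = 1 \<and> S = closed_segment (fst p) (snd p) + cball 0 1"
      using Tr by (auto simp: tube_iff)
    obtain p where p: "\<And>S. S \<in> Tr \<Longrightarrow> dist (fst (p S)) (snd (p S)) = 1 \<and>
                                S = closed_segment (fst (p S)) (snd (p S)) + cball 0 1"
      using bchoice[OF core_segment] by blast
    define c d where "c = fst \<circ> p" and "d = snd \<circ> p"
    have cd: "dist (c S) (d S) = 1 \<and> S = closed_segment (c S) (d S) + cball 0 1" if "S \<in> Tr" for S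
      using p[OF that] by (simp add: c_def d_def)
    have ends: "c S \<in> cball 0 3" "d S \<in> cball 0 3" if "S \<in> Tr" for S
      using unit_tube_meeting_ball_end_in_cball[of "c S" "d S"]
        unit_tube_meeting_ball_end_in_cball[of "d S" "c S"] cd[OF that] Tr that
      by (auto simp: dist_commute closed_segment_commute)
    have "inj_on (\<lambda>S. (net (c S), net (d S))) Tr"
    proof (rule inj_onI)
      fix S S' assume S: "S \<in> Tr" and S': "S' \<in> Tr" and "(net (c S), net (d S)) = (net (c S'), net (d S'))"
      then have "dist (c S) (c S') \<le> 1" "dist (d S) (d S') \<le> 1"
        using net[OF ends(1)[OF S]] net[OF ends(1)[OF S']] net[OF ends(2)[OF S]] net[OF ends(2)[OF S']]
          dist_triangle_half_l[of "c S" "net (c S)" 1 "c S'"] dist_triangle_half_l[of "d S" "net (d S)" 1 "d S'"]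
        by (auto simp: dist_commute)
      then have "comparable 1 S S'"
        using comparable_if_near_ends[of "c S" "c S'" 1 "d S" "d S'"] cd[OF S] cd[OF S'] by simp
      then show "S = S'"
        using \<open>ess_distinct 1 Tr\<close> S S' unfolding ess_distinct_def by blast
    qed
    moreover have "(\<lambda>S. (net (c S), net (d S))) ` Tr \<subseteq> F \<times> F"
      using net ends by auto
    ultimately show "card Tr \<le> card (F \<times> F)"
      using card_inj_on_le F(1) by blast
  qed
qed

lemma balanced_cover_meets_ball:
  assumes "finite TT" "TT \<noteq> {}" "\<forall>T\<in>TT. T \<noteq> {} \<and> T \<subseteq> ball 0 1"
    and "TT = (\<Union>S\<in>Tr. subfam TT S)"
    and "\<forall>S1\<in>Tr. \<forall>S2\<in>Tr. real (card (subfam TT S1)) \<le> K * real (card (subfam TT S2))"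
    and "S \<in> Tr"
  shows "S \<inter> ball 0 1 \<noteq> {}"
proof -
  obtain T0 where "T0 \<in> TT" using assms(2) by blast
  then obtain S1 where "S1 \<in> Tr" "subfam TT S1 \<noteq> {}" using assms(4) by blast
  then have "1 \<le> card (subfam TT S1)"
    using assms(1) by (simp add: Suc_le_eq card_gt_0_iff subfam_def)
  moreover have "real (card (subfam TT S1)) \<le> K * real (card (subfam TT S))"
    using assms(5) \<open>S1 \<in> Tr\<close> \<open>S \<in> Tr\<close> by blast
  ultimately have "card (subfam TT S) \<noteq> 0" by (cases "card (subfam TT S) = 0") auto
  then obtain T where "T \<in> TT" "T \<subseteq> S"
    by (metis (no_types, lifting) card.empty equals0I mem_Collect_eq subfam_def)
  then show ?thesis using assms(3) by blast
qed

section \<open>Densities\<close>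

lemma fmeasurable_if_measure_nonzero:
  assumes "measure M A \<noteq> 0"
  shows "A \<in> fmeasurable M"
  using assms measure_notin_sets[of A M] measure_zero_top[of M A]
  by (intro fmeasurableI) (auto simp: less_top[symmetric])

lemma sum_subfam_measure_eq_0:
  assumes "\<forall>V\<in>W. V \<in> sets lebesgue" "K \<in> lmeasurable" "measure lebesgue K = 0"
  shows "(\<Sum>V\<in>subfam W K. measure lebesgue V) = 0"
proof (rule sum.neutral, rule ballI)
  fix V assume "V \<in> subfam W K"
  then have "measure lebesgue V \<le> measure lebesgue K"
    using assms(1,2) by (intro measure_mono_fmeasurable) (auto simp: subfam_def)
  then show "measure lebesgue V = 0" using assms(3) by (simp add: order_antisym)
qed

lemma Delta_nonneg: "0 \<le> Delta W K"
  unfolding Delta_def by (simp add: sum_nonneg)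

lemma Delta_le_card:
  assumes "finite W" "\<forall>V\<in>W. V \<in> sets lebesgue"
  shows "Delta W K \<le> real (card W)"
proof (cases "measure lebesgue K = 0")
  case False
  then have K: "K \<in> lmeasurable" by (rule fmeasurable_if_measure_nonzero)
  have "(\<Sum>V\<in>subfam W K. measure lebesgue V) \<le> (\<Sum>V\<in>subfam W K. measure lebesgue K)"
    using assms(2) K by (intro sum_mono measure_mono_fmeasurable) (auto simp: subfam_def)
  also have "\<dots> \<le> real (card W) * measure lebesgue K"
    using assms(1) by (auto simp: subfam_def intro!: mult_right_mono card_mono)
  finally show ?thesis
    using False by (simp add: Delta_def divide_le_eq order_less_le)
qed (simp add: Delta_def)

lemma Delta_le_Delta_max:
  assumes "finite W" "\<forall>V\<in>W. V \<in> sets lebesgue" "convex K"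
  shows "Delta W K \<le> Delta_max W"
  unfolding Delta_max_def using Delta_le_card[OF assms(1,2)] assms(3)
  by (intro cSUP_upper bdd_aboveI2) auto

lemma Delta_max_nonneg:
  assumes "finite W" "\<forall>V\<in>W. V \<in> sets lebesgue"
  shows "0 \<le> Delta_max W"
  using Delta_le_Delta_max[OF assms convex_empty] Delta_nonneg[of W "{}"] by simp

lemma Delta_max_le:
  assumes "\<And>K. convex K \<Longrightarrow> Delta W K \<le> X"
  shows "Delta_max W \<le> X"
  unfolding Delta_max_def using assms convex_empty by (intro cSUP_least) auto

lemma Delta_max_le_card:
  assumes "finite W" "\<forall>V\<in>W. V \<in> sets lebesgue"
  shows "Delta_max W \<le> real (card W)"
  using Delta_le_card[OF assms] by (rule Delta_max_le)

lemma Delta_max_empty: "Delta_max {} = 0"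
  by (intro antisym Delta_max_le Delta_max_nonneg) (auto simp: Delta_def subfam_def)

lemma Delta_max_mono:
  assumes "finite W'" "\<forall>V\<in>W'. V \<in> sets lebesgue" "W \<subseteq> W'"
  shows "Delta_max W \<le> Delta_max W'"
proof (rule Delta_max_le)
  fix K :: "'a set" assume "convex K"
  have "Delta W K \<le> Delta W' K"
    unfolding Delta_def using assms
    by (intro divide_right_mono sum_mono2) (auto simp: subfam_def)
  also have "\<dots> \<le> Delta_max W'" using Delta_le_Delta_max[OF assms(1,2) \<open>convex K\<close>] .
  finally show "Delta W K \<le> Delta_max W'" .
qed

lemma sum_subfam_le_Delta_max:
  assumes "finite W" "\<forall>V\<in>W. V \<in> sets lebesgue" "K \<in> lmeasurable" "convex K"
  shows "(\<Sum>V\<in>subfam W K. measure lebesgue V) \<le> Delta_max W * measure lebesgue K"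
proof (cases "measure lebesgue K = 0")
  case True
  then show ?thesis using sum_subfam_measure_eq_0[OF assms(2,3)] by simp
next
  case False
  then show ?thesis
    using Delta_le_Delta_max[OF assms(1,2,4)] by (simp add: Delta_def divide_le_eq order_less_le)
qed

text \<open>A convex K of positive measure may be replaced by the closure of its intersection with a
  ball containing all members of W: convex sets have negligible frontier, so the measure does
  not grow.\<close>
lemma Delta_max_le_if_compact:
  fixes W :: "'a::euclidean_space set set"
  assumes "finite W" "\<forall>V\<in>W. compact V" "0 \<le> X"
    and bound: "\<And>K. compact K \<Longrightarrow> convex K \<Longrightarrow> (\<Sum>V\<in>subfam W K. measure lebesgue V) \<le> X * measure lebesgue K"
  shows "Delta_max W \<le> X"
proof (rule Delta_max_le)
  fix K :: "'a set" assume "convex K"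
  show "Delta W K \<le> X"
  proof (cases "measure lebesgue K = 0")
    case False
    then have "K \<in> lmeasurable" by (rule fmeasurable_if_measure_nonzero)
    have "bounded (\<Union>W)"
      using bounded_Union[OF assms(1)] assms(2) compact_imp_bounded by blast
    then obtain R where "\<forall>x\<in>\<Union>W. norm x \<le> R"
      unfolding bounded_iff by blast
    then have "\<Union>W \<subseteq> cball 0 R" by auto
    define K' where "K' = closure (K \<inter> cball 0 R)"
    have "compact K'" "convex K'"
      using \<open>convex K\<close> by (simp_all add: K'_def bounded_Int compact_closure convex_Int convex_closure)
    have "measure lebesgue K' = measure lebesgue (K \<inter> cball 0 R)"
      unfolding K'_def using \<open>convex K\<close>
      by (intro measure_closure negligible_convex_frontier convex_Int bounded_Int) auto
    also have "\<dots> \<le> measure lebesgue K"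
      using \<open>K \<in> lmeasurable\<close> by (intro measure_mono_fmeasurable) auto
    finally have "measure lebesgue K' \<le> measure lebesgue K" .
    have "(\<Sum>V\<in>subfam W K. measure lebesgue V) \<le> (\<Sum>V\<in>subfam W K'. measure lebesgue V)"
      using assms(1) \<open>\<Union>W \<subseteq> cball 0 R\<close> closure_subset[of "K \<inter> cball 0 R"]
      by (intro sum_mono2) (auto simp: subfam_def K'_def)
    also have "\<dots> \<le> X * measure lebesgue K'" using bound[OF \<open>compact K'\<close> \<open>convex K'\<close>] .
    also have "\<dots> \<le> X * measure lebesgue K"
      using \<open>measure lebesgue K' \<le> measure lebesgue K\<close> assms(3) by (rule mult_left_mono)
    finally show ?thesis
      using False by (simp add: Delta_def divide_le_eq order_less_le)
  qed (use assms(3) in \<open>simp add: Delta_def\<close>)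
qed

section \<open>The two-scale inequality and its iteration\<close>

lemma sum_subfam_le_sum_over_cover:
  fixes f :: "'a set \<Rightarrow> real"
  assumes "finite W" "finite Tr" "\<forall>V\<in>W. \<exists>S\<in>Tr. V \<subseteq> S" "\<forall>V\<in>W. 0 \<le> f V"
  shows "(\<Sum>V\<in>subfam W K. f V) \<le> (\<Sum>S\<in>Tr. \<Sum>V\<in>subfam W (K \<inter> S). f V)"
proof -
  have "(\<Sum>V\<in>subfam W K. f V) \<le> (\<Sum>V\<in>subfam W K. \<Sum>S\<in>{S. S \<in> Tr \<and> V \<subseteq> S}. f V)"
  proof (rule sum_mono)
    fix V assume "V \<in> subfam W K"
    then obtain S where "S \<in> Tr" "V \<subseteq> S" using assms(3) by (auto simp: subfam_def)
    then have "1 \<le> card {S. S \<in> Tr \<and> V \<subseteq> S}"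
      using assms(2) by (simp add: Suc_le_eq card_gt_0_iff) blast
    moreover have "0 \<le> f V" using assms(4) \<open>V \<in> subfam W K\<close> by (simp add: subfam_def)
    ultimately have "1 * f V \<le> real (card {S. S \<in> Tr \<and> V \<subseteq> S}) * f V"
      by (intro mult_right_mono) simp_all
    then show "f V \<le> (\<Sum>S\<in>{S. S \<in> Tr \<and> V \<subseteq> S}. f V)" by simp
  qed
  also have "\<dots> = (\<Sum>S\<in>Tr. \<Sum>V\<in>{V. V \<in> subfam W K \<and> V \<subseteq> S}. f V)"
    using assms(1,2) by (intro sum.swap_restrict) (auto simp: subfam_def)
  also have "\<dots> = (\<Sum>S\<in>Tr. \<Sum>V\<in>subfam W (K \<inter> S). f V)"
    by (simp add: subfam_def conj_ac)
  finally show ?thesis .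
qed

lemma sum_subfam_Int_tube_mult_le:
  fixes W :: "'a::euclidean_space set set"
  assumes "finite W" and W: "\<forall>V\<in>W. compact V \<and> (\<exists>a b. dist a b = 1 \<and> closed_segment a b \<subseteq> V)"
    and S: "tube \<rho> S" "0 \<le> \<rho>" and F: "Delta_max (subfam W S) \<le> F" "0 \<le> F"
    and K: "compact K" "convex K"
  shows "(\<Sum>V\<in>subfam W (K \<inter> S). measure lebesgue V) * measure lebesgue (K + cball 0 (4 * \<rho>))
           \<le> F * 16 ^ DIM('a) * measure lebesgue K *
              (if S \<subseteq> K + cball 0 (4 * \<rho>) then measure lebesgue S else 0)"
proof (cases "subfam W (K \<inter> S) = {}")
  case False
  then obtain V where "V \<in> W" "V \<subseteq> K" "V \<subseteq> S" by (auto simp: subfam_def)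
  then obtain a b where "dist a b = 1" "closed_segment a b \<subseteq> V" using W by blast
  then have "S \<subseteq> closed_segment a b + cball 0 (4 * \<rho>)"
    using tube_subset_plus_cball S(1) \<open>V \<subseteq> S\<close> by blast
  also have "\<dots> \<subseteq> K + cball 0 (4 * \<rho>)"
    using \<open>closed_segment a b \<subseteq> V\<close> \<open>V \<subseteq> K\<close> by (intro set_plus_mono2) auto
  finally have "S \<subseteq> K + cball 0 (4 * \<rho>)" .
  obtain c where "cball c \<rho> \<subseteq> S" using S(1) tube_contains_cball by blast
  have "compact S" "convex S" using S(1) tube_compact tube_convex by blast+
  have "subfam W (K \<inter> S) = subfam (subfam W S) (K \<inter> S)" by (auto simp: subfam_def)
  then have "(\<Sum>V\<in>subfam W (K \<inter> S). measure lebesgue V) \<le> Delta_max (subfam W S) * measure lebesgue (K \<inter> S)"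
    using assms(1) W K \<open>compact S\<close> \<open>convex S\<close>
    by (simp only:) (intro sum_subfam_le_Delta_max;
        auto simp: subfam_def lmeasurable_compact convex_Int intro: fmeasurableD)
  also have "\<dots> \<le> F * measure lebesgue (K \<inter> S)"
    using F(1) by (intro mult_right_mono) auto
  finally have "(\<Sum>V\<in>subfam W (K \<inter> S). measure lebesgue V) * measure lebesgue (K + cball 0 (4 * \<rho>))
                  \<le> F * (measure lebesgue (K \<inter> S) * measure lebesgue (K + cball 0 (4 * \<rho>)))"
    unfolding mult.assoc[symmetric] by (rule mult_right_mono) simp
  also have "\<dots> \<le> F * (16 ^ DIM('a) * measure lebesgue K * measure lebesgue S)"
    using measure_Int_mult_plus_cball_le[OF K \<open>compact S\<close> \<open>convex S\<close> S(2) \<open>cball c \<rho> \<subseteq> S\<close>] F(2)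
    by (rule mult_left_mono)
  finally show ?thesis using \<open>S \<subseteq> K + cball 0 (4 * \<rho>)\<close> by (simp add: mult_ac)
qed (simp add: F(2))

lemma Delta_max_two_scale:
  fixes W Tr :: "'a::euclidean_space set set"
  assumes "finite W" "finite Tr"
    and W: "\<forall>V\<in>W. compact V \<and> (\<exists>a b. dist a b = 1 \<and> closed_segment a b \<subseteq> V)"
    and Tr: "\<forall>S\<in>Tr. tube \<rho> S" "0 \<le> \<rho>"
    and cover: "\<forall>V\<in>W. \<exists>S\<in>Tr. V \<subseteq> S"
    and F: "\<forall>S\<in>Tr. Delta_max (subfam W S) \<le> F" "0 \<le> F"
  shows "Delta_max W \<le> 16 ^ DIM('a) * Delta_max Tr * F"
proof (rule Delta_max_le_if_compact)
  show "finite W" "\<forall>V\<in>W. compact V" using assms(1) W by auto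
  have W_meas: "\<forall>V\<in>W. V \<in> sets lebesgue" and Tr_meas: "\<forall>S\<in>Tr. S \<in> sets lebesgue"
    using W Tr(1) by (auto intro: fmeasurableD lmeasurable_compact tube_lmeasurable)
  show "0 \<le> 16 ^ DIM('a) * Delta_max Tr * F"
    using Delta_max_nonneg[OF assms(2) Tr_meas] F(2) by simp
  fix K :: "'a set" assume "compact K" "convex K"
  define K' where "K' = K + cball 0 (4 * \<rho>)"
  have "compact K'" "convex K'"
    using \<open>compact K\<close> \<open>convex K\<close> by (simp_all add: K'_def compact_set_plus convex_set_plus)
  show "(\<Sum>V\<in>subfam W K. measure lebesgue V) \<le> 16 ^ DIM('a) * Delta_max Tr * F * measure lebesgue K"
  proof (cases "measure lebesgue K' = 0")
    case True
    have "measure lebesgue K \<le> measure lebesgue K'"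
      using \<open>compact K\<close> \<open>compact K'\<close> Tr(2) set_zero_plus2[of "cball 0 (4 * \<rho>)" K]
      by (intro measure_mono_fmeasurable) (auto simp: K'_def add.commute lmeasurable_compact fmeasurableD)
    then have "measure lebesgue K = 0" using True by (simp add: antisym)
    then show ?thesis
      using sum_subfam_measure_eq_0[OF W_meas, of K] \<open>compact K\<close> by (simp add: lmeasurable_compact)
  next
    case False
    have per_tube: "(\<Sum>V\<in>subfam W (K \<inter> S). measure lebesgue V) * measure lebesgue K'
        \<le> F * 16 ^ DIM('a) * measure lebesgue K * (if S \<subseteq> K' then measure lebesgue S else 0)"
      if "S \<in> Tr" for S
      unfolding K'_def using assms(1) W Tr \<open>S \<in> Tr\<close> F \<open>compact K\<close> \<open>convex K\<close>
      by (intro sum_subfam_Int_tube_mult_le) auto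
    have "(\<Sum>V\<in>subfam W K. measure lebesgue V) * measure lebesgue K'
            \<le> (\<Sum>S\<in>Tr. (\<Sum>V\<in>subfam W (K \<inter> S). measure lebesgue V) * measure lebesgue K')"
      unfolding sum_distrib_right[symmetric]
      using sum_subfam_le_sum_over_cover[OF assms(1,2) cover, of "measure lebesgue" K]
      by (rule mult_right_mono) simp_all
    also have "\<dots> \<le> (\<Sum>S\<in>Tr. F * 16 ^ DIM('a) * measure lebesgue K * (if S \<subseteq> K' then measure lebesgue S else 0))"
      using per_tube by (rule sum_mono)
    also have "\<dots> = F * 16 ^ DIM('a) * measure lebesgue K * (\<Sum>S\<in>subfam Tr K'. measure lebesgue S)"
      using assms(2) by (simp add: sum_distrib_left sum.inter_filter subfam_def)
    also have "\<dots> \<le> F * 16 ^ DIM('a) * measure lebesgue K * (Delta_max Tr * measure lebesgue K')"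
      using sum_subfam_le_Delta_max[OF assms(2) Tr_meas _ \<open>convex K'\<close>] \<open>compact K'\<close> F(2)
      by (intro mult_left_mono) (auto simp: lmeasurable_compact)
    finally show ?thesis
      using False by (simp add: mult_ac order_less_le)
  qed
qed

lemma le_if_decreasing_upto:
  fixes f :: "nat \<Rightarrow> 'b::preorder"
  assumes "\<forall>k<M. f (Suc k) \<le> f k" "j \<le> M"
  shows "f M \<le> f j"
  using assms(2)
proof (induction rule: dec_induct)
  case (step n)
  then show ?case using assms(1) order_trans by blast
qed simp

lemma Delta_max_multiscale:
  fixes Tr :: "nat \<Rightarrow> 'a::euclidean_space set set"
  assumes "\<forall>k\<le>m. finite (Tr k) \<and> 0 \<le> \<rho> k \<and> (\<forall>S\<in>Tr k. tube (\<rho> k) S)"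
    and "\<forall>k\<in>{1..m}. \<forall>S\<in>Tr k. \<exists>S'\<in>Tr (k - 1). S \<subseteq> S'"
  shows "Delta_max (Tr m) \<le> Delta_max (Tr 0) * (16 ^ DIM('a)) ^ m *
           (\<Prod>i=1..m. Max (insert 0 ((\<lambda>S. Delta_max (subfam (Tr i) S)) ` Tr (i - 1))))"
  using assms
proof (induction m)
  case (Suc m)
  define F where "F = Max (insert 0 ((\<lambda>S. Delta_max (subfam (Tr (Suc m)) S)) ` Tr m))"
  have fin: "finite (insert 0 ((\<lambda>S. Delta_max (subfam (Tr (Suc m)) S)) ` Tr m))"
    using Suc.prems(1) by simp
  then have "0 \<le> F" "\<forall>S\<in>Tr m. Delta_max (subfam (Tr (Suc m)) S) \<le> F"
    unfolding F_def by (auto intro: Max_ge)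
  have "Delta_max (Tr (Suc m)) \<le> 16 ^ DIM('a) * Delta_max (Tr m) * F"
  proof (rule Delta_max_two_scale[where \<rho> = "\<rho> m"])
    show "\<forall>V\<in>Tr (Suc m). compact V \<and> (\<exists>a b. dist a b = 1 \<and> closed_segment a b \<subseteq> V)"
      using Suc.prems(1) by (metis le_refl tube_compact tube_contains_unit_segment)
    show "\<forall>V\<in>Tr (Suc m). \<exists>S\<in>Tr m. V \<subseteq> S"
      using bspec[OF Suc.prems(2), of "Suc m"] by simp
  qed (use Suc.prems(1) \<open>0 \<le> F\<close> \<open>\<forall>S\<in>Tr m. Delta_max (subfam (Tr (Suc m)) S) \<le> F\<close> in auto)
  also have "\<dots> \<le> 16 ^ DIM('a) * (Delta_max (Tr 0) * (16 ^ DIM('a)) ^ m *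
           (\<Prod>i=1..m. Max (insert 0 ((\<lambda>S. Delta_max (subfam (Tr i) S)) ` Tr (i - 1))))) * F"
    using Suc.IH Suc.prems \<open>0 \<le> F\<close> by (intro mult_right_mono mult_left_mono) auto
  finally show ?case
    by (simp add: F_def prod.cl_ivl_Suc mult_ac)
qed simp

text \<open>Essential distinctness and the balance condition are needed only at the coarsest scale,
  where they bound card (Tr 0).\<close>
lemma Delta_max_le_multiscale_product:
  fixes TT :: "'a::euclidean_space set set" and P :: nat
  assumes packing: "\<And>Tr :: 'a set set. finite Tr \<Longrightarrow> \<forall>S\<in>Tr. tube 1 S \<and> S \<inter> ball 0 1 \<noteq> {} \<Longrightarrow>
                      ess_distinct 1 Tr \<Longrightarrow> card Tr \<le> P"
    and "1 \<le> P"
    and TT: "finite TT" "0 < \<delta>" "\<forall>T\<in>TT. tube \<delta> T \<and> T \<subseteq> ball 0 1"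
    and \<rho>: "\<rho> M = \<delta>" "\<rho> 0 = 1" "\<forall>k<M. \<rho> (Suc k) \<le> \<rho> k"
    and levels: "\<forall>k\<le>M. finite (Tr k) \<and> (\<forall>S\<in>Tr k. tube (\<rho> k) S) \<and>
       TT = (\<Union>S\<in>Tr k. subfam TT S) \<and>
       ess_distinct (\<rho> k) (Tr k) \<and>
       (\<forall>T\<in>TT. real (card {S\<in>Tr k. T \<subseteq> S}) \<le> K) \<and>
       (\<forall>S1\<in>Tr k. \<forall>S2\<in>Tr k. real (card (subfam TT S1)) \<le> K * real (card (subfam TT S2)))"
    and nested: "\<forall>k\<in>{1..M}. \<forall>S\<in>Tr k. \<exists>S'\<in>Tr (k - 1). S \<subseteq> S'"
  shows "Delta_max TT \<le> (real P * 16 ^ DIM('a)) ^ M *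
           (\<Prod>m=1..M. Max (insert 0 ((\<lambda>S. Delta_max (subfam (Tr m) S)) ` Tr (m - 1))))"
    (is "_ \<le> _ * ?prod")
proof -
  have level: "finite (Tr k)" "\<forall>S\<in>Tr k. tube (\<rho> k) S" "TT = (\<Union>S\<in>Tr k. subfam TT S)"
    "\<forall>S1\<in>Tr k. \<forall>S2\<in>Tr k. real (card (subfam TT S1)) \<le> K * real (card (subfam TT S2))"
    if "k \<le> M" for k
    using levels that by auto
  have level_sets: "\<forall>S\<in>Tr k. S \<in> sets lebesgue" if "k \<le> M" for k
    using level(2)[OF that] by (blast intro: fmeasurableD tube_lmeasurable)
  have "0 \<le> ?prod"
    using level(1) by (intro prod_nonneg) (auto intro: Max_ge)
  show ?thesis
  proof (cases "TT = {}")
    case True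
    then show ?thesis using \<open>0 \<le> ?prod\<close> by (simp add: Delta_max_empty)
  next
    case False
    then obtain T where "T \<in> TT" by blast
    have "M \<noteq> 0"
    proof
      assume "M = 0"
      then have "tube 1 T" "T \<subseteq> ball 0 1" using \<open>T \<in> TT\<close> TT(3) \<rho>(1,2) by auto
      then show False using unit_tube_not_subset_ball by blast
    qed
    have "0 \<le> \<rho> k" if "k \<le> M" for k
      using le_if_decreasing_upto[OF \<rho>(3) that] \<rho>(1) TT(2) by linarith
    have "\<forall>T\<in>TT. T \<noteq> {} \<and> T \<subseteq> ball 0 1"
      using TT(2,3) tube_nonempty by fastforce
    then have "\<forall>S\<in>Tr 0. S \<inter> ball 0 1 \<noteq> {}"
      using balanced_cover_meets_ball[OF TT(1) False _ level(3,4)] by blast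
    then have "card (Tr 0) \<le> P"
      using levels \<rho>(2) by (intro packing) auto
    then have "Delta_max (Tr 0) \<le> real P"
      using Delta_max_le_card[OF level(1) level_sets] by force
    have "Delta_max TT \<le> Delta_max (Tr M)"
      using level(1-3)[of M] level_sets[of M] TT \<rho>(1) tube_family_subset_covering_tubes[of \<delta> TT "Tr M"]
      by (intro Delta_max_mono) auto
    also have "\<dots> \<le> Delta_max (Tr 0) * (16 ^ DIM('a)) ^ M * ?prod"
      using level(1,2) \<open>\<And>k. k \<le> M \<Longrightarrow> 0 \<le> \<rho> k\<close> nested by (intro Delta_max_multiscale[where \<rho> = \<rho>]) auto
    also have "\<dots> \<le> real P * (16 ^ DIM('a)) ^ M * ?prod"
      using \<open>Delta_max (Tr 0) \<le> real P\<close> \<open>0 \<le> ?prod\<close> by (intro mult_right_mono) auto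
    also have "\<dots> \<le> (real P * 16 ^ DIM('a)) ^ M * ?prod"
      using \<open>1 \<le> P\<close> \<open>M \<noteq> 0\<close> \<open>0 \<le> ?prod\<close>
      by (intro mult_right_mono) (auto simp: power_mult_distrib intro!: power_increasing[of 1 M, simplified])
    finally show ?thesis .
  qed
qed

theorem lemma7p4:
  fixes K :: real
  assumes "K \<ge> 1"
  shows "\<exists>C>0. \<forall>(TT :: 'a::euclidean_space set set) (\<delta>::real) (M::nat)
            (\<rho> :: nat \<Rightarrow> real) (Tr :: nat \<Rightarrow> 'a set set).
    finite TT \<and> 0 < \<delta> \<and> (\<forall>T\<in>TT. tube \<delta> T \<and> T \<subseteq> ball 0 1) \<and>
    \<rho> M = \<delta> \<and> \<rho> 0 = 1 \<and> (\<forall>k<M. \<rho> (Suc k) \<le> \<rho> k) \<and>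
    (\<forall>k\<le>M. finite (Tr k) \<and> (\<forall>S\<in>Tr k. tube (\<rho> k) S) \<and>
       TT = (\<Union>S\<in>Tr k. subfam TT S) \<and>
       ess_distinct (\<rho> k) (Tr k) \<and>
       (\<forall>T\<in>TT. real (card {S\<in>Tr k. T \<subseteq> S}) \<le> K) \<and>
       (\<forall>S1\<in>Tr k. \<forall>S2\<in>Tr k. real (card (subfam TT S1)) \<le> K * real (card (subfam TT S2)))) \<and>
    (\<forall>k\<in>{1..M}. \<forall>S\<in>Tr k. \<exists>S'\<in>Tr (k - 1). S \<subseteq> S')
    \<longrightarrow> Delta_max TT \<le> C ^ M * (\<Prod>m=1..M.
           Max (insert 0 ((\<lambda>S. Delta_max (subfam (Tr m) S)) ` Tr (m - 1))))"
proof -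
  obtain P :: nat where P: "\<And>Tr :: 'a set set. finite Tr \<Longrightarrow> \<forall>S\<in>Tr. tube 1 S \<and> S \<inter> ball 0 1 \<noteq> {} \<Longrightarrow>
                             ess_distinct 1 Tr \<Longrightarrow> card Tr \<le> P"
    by (rule card_ess_distinct_unit_tubes_bounded) blast
  have "card Tr \<le> max P 1"
    if "finite Tr" "\<forall>S\<in>Tr. tube 1 S \<and> S \<inter> ball 0 1 \<noteq> {}" "ess_distinct 1 Tr" for Tr :: "'a set set"
    using P[OF that] by (simp add: le_max_iff_disj)
  note bound = Delta_max_le_multiscale_product[OF this max.cobounded2]
  show ?thesis
  proof (intro exI[of _ "real (max P 1) * 16 ^ DIM('a)"] conjI allI impI)
    show "0 < real (max P 1) * 16 ^ DIM('a)" by (simp add: max_def)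
  qed (elim conjE, rule bound)
qed

end
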